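(* Let $P_0>0$, $T>0$, $\sigma>0$, $\tau>0$, $w\in\mathbb R$, $P_t=\frac{P_0}{1+P_0t}$, $\alpha(t)=-\frac{(1+P_0t)(T-t)}{1+P_0(2T-t)}$, $\gamma(t)=\frac12\log\!\big(\frac{(1+P_0t)(1+P_0(2T-t))}{(1+P_0T)^2}\big)$, $\eta(t)=\frac{\tau}{2}\int_t^T\alpha(s)ds$, $\zeta(t)=-\int_t^T\big(\frac{\tau}{2}[\log\frac{\pi\tau}{\sigma^2}-\gamma(s)]-P_s^2\eta(s)\big)ds$ ($\pi=3.14159\ldots$). Then $$V(t,x,m)=e^{\alpha(t)m^2+\gamma(t)}(x-w)^2+\eta(t)m^2+\zeta(t)$$ satisfies, for all $t\in[0,T]$, $x,m\in\mathbb R$, $$0=V_t+\frac{P_t^2}{2}V_{mm}-\frac{(mV_x+P_tV_{xm})^2}{2V_{xx}}-\frac{\tau}{2}\log\!\Big(\frac{2\pi\tau}{\sigma^2V_{xx}}\Big),\qquad V(T,x,m)=(x-w)^2.$$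
   Context: This is the reduced HJB equation of entropy-regularized mean–variance control under Bayesian drift uncertainty, written along the deterministic posterior-variance path $P=P_t$ (which satisfies $dP_t/dt=-P_t^2$); $x$ is discounted wealth and $m$ the posterior mean of the unknown Sharpe ratio. *)

theory Defs
  imports "HOL-Analysis.Analysis"
begin

definition Pt :: "real \<Rightarrow> real \<Rightarrow> real" where
  "Pt P0 t = P0 / (1 + P0 * t)"

definition alpha :: "real \<Rightarrow> real \<Rightarrow> real \<Rightarrow> real" where
  "alpha P0 T t = - ((1 + P0 * t) * (T - t)) / (1 + P0 * (2 * T - t))"

definition gamma :: "real \<Rightarrow> real \<Rightarrow> real \<Rightarrow> real" where
  "gamma P0 T t = (1/2) * ln (((1 + P0 * t) * (1 + P0 * (2 * T - t))) / (1 + P0 * T)^2)"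

definition eta :: "real \<Rightarrow> real \<Rightarrow> real \<Rightarrow> real \<Rightarrow> real" where
  "eta P0 T tau t = (tau / 2) * integral {t..T} (alpha P0 T)"

definition zeta :: "real \<Rightarrow> real \<Rightarrow> real \<Rightarrow> real \<Rightarrow> real \<Rightarrow> real" where
  "zeta P0 T tau sig t =
     - integral {t..T} (\<lambda>s. (tau / 2) * (ln (pi * tau / sig^2) - gamma P0 T s)
                             - (Pt P0 s)^2 * eta P0 T tau s)"

definition Vfun :: "real \<Rightarrow> real \<Rightarrow> real \<Rightarrow> real \<Rightarrow> real \<Rightarrow> real \<Rightarrow> real \<Rightarrow> real \<Rightarrow> real" where
  "Vfun P0 T tau sig w t x m =
     exp (alpha P0 T t * m^2 + gamma P0 T t) * (x - w)^2 + eta P0 T tau t * m^2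
     + zeta P0 T tau sig t"

end

theory Submission
  imports Defs
begin

(* Since V_xx = 2 e^(alpha m^2 + gamma) > 0, substituting the ansatz turns the HJB residual into
   e^(alpha m^2 + gamma) (x - w)^2 (c1 m^2 + c0) + (d1 m^2 + d0), and it vanishes identically iff
   alpha' = 1 + 4 P alpha + 2 P^2 alpha^2, gamma' = - P^2 alpha, eta' = - tau alpha / 2 and
   zeta' = tau/2 (log (pi tau / sigma^2) - gamma) - P^2 eta.  The explicit alpha and gamma solve the
   first two equations because P_t alpha(t) = - P0 (T - t) / (1 + P0 (2T - t)); eta and zeta are
   integrals of exactly the right-hand sides of the last two.  All four coefficients vanish at T. *)

lemma Pt_mult_alpha:
  fixes P0 T t :: real
  assumes "1 + P0 * t \<noteq> 0"
  shows "Pt P0 t * alpha P0 T t = - P0 * (T - t) / (1 + P0 * (2 * T - t))"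
  using assms by (simp add: Pt_def alpha_def)

lemma alpha_has_real_derivative:
  fixes P0 T t :: real
  assumes "1 + P0 * t \<noteq> 0" and "1 + P0 * (2 * T - t) \<noteq> 0"
  shows "(alpha P0 T has_real_derivative
           1 + 4 * Pt P0 t * alpha P0 T t + 2 * (Pt P0 t)^2 * (alpha P0 T t)^2) (at t)"
proof -
  define u where "u = 1 + P0 * t"
  define s where "s = T - t"
  define D where "D = 1 + P0 * (2 * T - t)"
  have "D \<noteq> 0" and D_eq: "D = u + 2 * P0 * s"
    using assms(2) by (simp_all add: u_def s_def D_def algebra_simps)
  have "(alpha P0 T has_real_derivative ((u - P0 * s) * D - P0 * u * s) / D^2) (at t)"
    unfolding alpha_def[abs_def] u_def s_def D_def using assms(2)
    by (auto intro!: derivative_eq_intros simp: field_simps power2_eq_square)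
  also have "((u - P0 * s) * D - P0 * u * s) / D^2 = 1 + 4 * (- P0 * s / D) + 2 * (- P0 * s / D)^2"
    using \<open>D \<noteq> 0\<close> by (simp add: field_simps power2_eq_square) (simp add: D_eq algebra_simps)
  also have "- P0 * s / D = Pt P0 t * alpha P0 T t"
    unfolding s_def D_def by (rule Pt_mult_alpha[OF assms(1), symmetric])
  finally show ?thesis by (simp add: power_mult_distrib mult.assoc)
qed

lemma gamma_has_real_derivative:
  fixes P0 T t :: real
  assumes "0 < 1 + P0 * t" and "0 < 1 + P0 * (2 * T - t)"
  shows "(gamma P0 T has_real_derivative - ((Pt P0 t)^2 * alpha P0 T t)) (at t)"
proof -
  define u where "u = 1 + P0 * t"
  define s where "s = T - t"
  define D where "D = 1 + P0 * (2 * T - t)"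
  have "0 < u" "0 < D" and D_eq: "D = u + 2 * P0 * s"
    using assms by (simp_all add: u_def s_def D_def algebra_simps)
  have "0 < 1 + P0 * T" using assms by (simp add: algebra_simps)
  then have "(gamma P0 T has_real_derivative (P0 / u - P0 / D) / 2) (at t)"
    unfolding gamma_def[abs_def] u_def D_def using assms
    apply (intro derivative_eq_intros)
     apply (auto simp: power2_eq_square)
    apply (simp add: field_simps)
    done
  also have "(P0 / u - P0 / D) / 2 = - (P0 / u * (- P0 * s / D))"
    using \<open>0 < u\<close> \<open>0 < D\<close> by (simp add: field_simps) (simp add: D_eq algebra_simps)
  also have "P0 / u * (- P0 * s / D) = Pt P0 t * (Pt P0 t * alpha P0 T t)"
    using Pt_mult_alpha[of P0 t T] \<open>0 < u\<close> by (simp add: Pt_def u_def s_def D_def)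
  finally show ?thesis by (simp add: power2_eq_square mult.assoc)
qed

lemma one_plus_pos_on_horizon:
  fixes P0 T t :: real
  assumes "0 \<le> P0" and "t \<in> {0..T}"
  shows "0 < 1 + P0 * t" and "0 < 1 + P0 * (2 * T - t)"
  using assms by (simp_all add: add_pos_nonneg)

lemma continuous_on_alpha:
  fixes P0 T :: real
  assumes "0 \<le> P0"
  shows "continuous_on {0..T} (alpha P0 T)"
proof (intro continuous_at_imp_continuous_on ballI)
  fix t assume "t \<in> {0..T}"
  then have "1 + P0 * t \<noteq> 0" and "1 + P0 * (2 * T - t) \<noteq> 0"
    using one_plus_pos_on_horizon[OF assms] by force+
  from alpha_has_real_derivative[OF this] show "isCont (alpha P0 T) t"
    by (rule DERIV_isCont)
qed

lemma continuous_on_gamma: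
  fixes P0 T :: real
  assumes "0 \<le> P0"
  shows "continuous_on {0..T} (gamma P0 T)"
proof (intro continuous_at_imp_continuous_on ballI)
  fix t assume "t \<in> {0..T}"
  from gamma_has_real_derivative[OF one_plus_pos_on_horizon[OF assms this]]
  show "isCont (gamma P0 T) t"
    by (rule DERIV_isCont)
qed

lemma eta_has_real_derivative:
  fixes P0 T tau t :: real
  assumes "0 \<le> P0" and "t \<in> {0..T}"
  shows "(eta P0 T tau has_real_derivative - (tau / 2 * alpha P0 T t)) (at t within {0..T})"
  unfolding eta_def[abs_def]
  using integral_has_real_derivative'[OF continuous_on_alpha[OF assms(1)] assms(2)]
  by (auto intro!: derivative_eq_intros)

lemma continuous_on_eta:
  fixes P0 T tau :: real
  assumes "0 \<le> P0"
  shows "continuous_on {0..T} (eta P0 T tau)"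
  using eta_has_real_derivative[OF assms] by (rule DERIV_continuous_on)

lemma zeta_has_real_derivative:
  fixes P0 T tau sig t :: real
  assumes "0 \<le> P0" and "t \<in> {0..T}"
  shows "(zeta P0 T tau sig has_real_derivative
           tau / 2 * (ln (pi * tau / sig^2) - gamma P0 T t) - (Pt P0 t)^2 * eta P0 T tau t)
         (at t within {0..T})"
proof -
  have "continuous_on {0..T} (Pt P0)"
    unfolding Pt_def[abs_def] using one_plus_pos_on_horizon(1)[OF assms(1)]
    by (intro continuous_intros) (auto simp: less_imp_neq[symmetric])
  then have "continuous_on {0..T}
      (\<lambda>s. tau / 2 * (ln (pi * tau / sig^2) - gamma P0 T s) - (Pt P0 s)^2 * eta P0 T tau s)"
    using continuous_on_gamma[OF assms(1)] continuous_on_eta[OF assms(1)]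
    by (intro continuous_intros)
  from integral_has_real_derivative'[OF this assms(2)] show ?thesis
    unfolding zeta_def[abs_def] by (auto intro!: derivative_eq_intros)
qed

lemma Vfun_terminal:
  fixes P0 T tau sig w x m :: real
  assumes "0 < 1 + P0 * T"
  shows "Vfun P0 T tau sig w T x m = (x - w)^2"
  using assms by (simp add: Vfun_def alpha_def gamma_def eta_def zeta_def power2_eq_square)

definition entropy_hjb_at ::
    "(real \<Rightarrow> real \<Rightarrow> real \<Rightarrow> real) \<Rightarrow> real set \<Rightarrow> real \<Rightarrow> real \<Rightarrow> real \<Rightarrow> real \<Rightarrow> real \<Rightarrow> real \<Rightarrow> bool"
  where "entropy_hjb_at V S P tau sig t x m \<longleftrightarrow>
    (\<exists>Vx Vm :: real \<Rightarrow> real \<Rightarrow> real. \<exists>Vt Vxx Vmm Vxm :: real.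
       ((\<lambda>s. V s x m) has_real_derivative Vt) (at t within S) \<and>
       (\<forall>y n. ((\<lambda>z. V t z n) has_real_derivative Vx y n) (at y)) \<and>
       (\<forall>y n. ((\<lambda>k. V t y k) has_real_derivative Vm y n) (at n)) \<and>
       ((\<lambda>y. Vx y m) has_real_derivative Vxx) (at x) \<and>
       ((\<lambda>n. Vx x n) has_real_derivative Vxm) (at m) \<and>
       ((\<lambda>n. Vm x n) has_real_derivative Vmm) (at m) \<and>
       0 = Vt + P^2 / 2 * Vmm - (m * Vx x m + P * Vxm)^2 / (2 * Vxx)
           - tau / 2 * ln (2 * pi * tau / (sig^2 * Vxx)))"

lemma exp_quadratic_ansatz_solves_entropy_hjb:
  fixes A G H Z :: "real \<Rightarrow> real" and P tau sig w t x m :: real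
  assumes "0 < tau" and "sig \<noteq> 0"
    and A: "(A has_real_derivative 1 + 4 * P * A t + 2 * P^2 * (A t)^2) (at t within S)"
    and G: "(G has_real_derivative - (P^2 * A t)) (at t within S)"
    and H: "(H has_real_derivative - (tau / 2 * A t)) (at t within S)"
    and Z: "(Z has_real_derivative tau / 2 * (ln (pi * tau / sig^2) - G t) - P^2 * H t)
              (at t within S)"
  shows "entropy_hjb_at (\<lambda>s x m. exp (A s * m^2 + G s) * (x - w)^2 + H s * m^2 + Z s)
           S P tau sig t x m"
proof -
  define L where "L = ln (pi * tau / sig^2)"
  define E where "E = exp (A t * m^2 + G t)"
  define Vx where "Vx = (\<lambda>y n. exp (A t * n^2 + G t) * (2 * (y - w)))"
  define Vm where "Vm = (\<lambda>y n. exp (A t * n^2 + G t) * (2 * A t * n) * (y - w)^2 + H t * (2 * n))"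
  define Vt where "Vt = ((1 + 4 * P * A t + 2 * P^2 * (A t)^2) * m^2 - P^2 * A t) * E * (x - w)^2
                         - tau / 2 * A t * m^2 + tau / 2 * (L - G t) - P^2 * H t"
  define Vxx where "Vxx = 2 * E"
  define Vxm where "Vxm = 4 * A t * m * E * (x - w)"
  define Vmm where "Vmm = (2 * A t + 4 * (A t)^2 * m^2) * E * (x - w)^2 + 2 * H t"
  have "((\<lambda>s. exp (A s * m^2 + G s) * (x - w)^2 + H s * m^2 + Z s) has_real_derivative Vt)
          (at t within S)"
    by (rule derivative_eq_intros A G H Z refl)+
       (simp add: Vt_def E_def L_def algebra_simps)
  moreover have "\<forall>y n. ((\<lambda>z. exp (A t * n^2 + G t) * (z - w)^2 + H t * n^2 + Z t)
                    has_real_derivative Vx y n) (at y)"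
    unfolding Vx_def by (auto intro!: derivative_eq_intros)
  moreover have "\<forall>y n. ((\<lambda>k. exp (A t * k^2 + G t) * (y - w)^2 + H t * k^2 + Z t)
                    has_real_derivative Vm y n) (at n)"
    unfolding Vm_def by (auto intro!: derivative_eq_intros)
  moreover have "((\<lambda>y. Vx y m) has_real_derivative Vxx) (at x)"
    unfolding Vx_def Vxx_def E_def by (auto intro!: derivative_eq_intros)
  moreover have "((\<lambda>n. Vx x n) has_real_derivative Vxm) (at m)"
    unfolding Vx_def Vxm_def E_def by (auto intro!: derivative_eq_intros)
  moreover have "((\<lambda>n. Vm x n) has_real_derivative Vmm) (at m)"
    unfolding Vm_def Vmm_def E_def
    by (auto intro!: derivative_eq_intros simp: algebra_simps power2_eq_square)
  moreover have "0 = Vt + P^2 / 2 * Vmm - (m * Vx x m + P * Vxm)^2 / (2 * Vxx)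
                     - tau / 2 * ln (2 * pi * tau / (sig^2 * Vxx))"
  proof -
    have "0 < E" and "0 < pi * tau / sig^2"
      using assms(1,2) by (simp_all add: E_def)
    have "ln (2 * pi * tau / (sig^2 * Vxx)) = ln ((pi * tau / sig^2) / E)"
      by (simp add: Vxx_def)
    also have "\<dots> = L - ln E"
      using \<open>0 < E\<close> \<open>0 < pi * tau / sig^2\<close> by (simp only: L_def ln_divide_pos)
    finally have log_term: "ln (2 * pi * tau / (sig^2 * Vxx)) = L - (A t * m^2 + G t)"
      by (simp add: E_def)
    have control_term: "(m * Vx x m + P * Vxm)^2 / (2 * Vxx) = (1 + 2 * P * A t)^2 * m^2 * E * (x - w)^2"
      using \<open>0 < E\<close> by (simp add: Vx_def Vxm_def Vxx_def flip: E_def) (simp add: field_simps power2_eq_square)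
    show ?thesis
      unfolding log_term control_term by (simp add: Vt_def Vmm_def field_simps power2_eq_square)
  qed
  ultimately show ?thesis
    unfolding entropy_hjb_at_def by blast
qed

theorem mainTheorem7:
  fixes P0 T sig tau w :: real
  assumes "P0 > 0" and "T > 0" and "sig > 0" and "tau > 0"
  defines "V \<equiv> Vfun P0 T tau sig w"
  shows "(\<forall>t\<in>{0..T}. \<forall>x m::real.
           \<exists>Vx Vm :: real \<Rightarrow> real \<Rightarrow> real. \<exists>Vt Vxx Vmm Vxm :: real.
             ((\<lambda>s. V s x m) has_real_derivative Vt) (at t within {0..T}) \<and>
             (\<forall>y n. ((\<lambda>z. V t z n) has_real_derivative Vx y n) (at y)) \<and>
             (\<forall>y n. ((\<lambda>k. V t y k) has_real_derivative Vm y n) (at n)) \<and>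
             ((\<lambda>y. Vx y m) has_real_derivative Vxx) (at x) \<and>
             ((\<lambda>n. Vx x n) has_real_derivative Vxm) (at m) \<and>
             ((\<lambda>n. Vm x n) has_real_derivative Vmm) (at m) \<and>
             0 = Vt + (Pt P0 t)^2 / 2 * Vmm
                 - (m * Vx x m + Pt P0 t * Vxm)^2 / (2 * Vxx)
                 - tau / 2 * ln (2 * pi * tau / (sig^2 * Vxx)))
         \<and> (\<forall>x m. V T x m = (x - w)^2)"
proof -
  have "entropy_hjb_at V {0..T} (Pt P0 t) tau sig t x m" if t: "t \<in> {0..T}" for t x m
  proof -
    have "0 \<le> P0" using assms(1) by simp
    note pos = one_plus_pos_on_horizon[OF this t]
    have "(alpha P0 T has_real_derivative
            1 + 4 * Pt P0 t * alpha P0 T t + 2 * (Pt P0 t)^2 * (alpha P0 T t)^2) (at t within {0..T})"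
      using pos by (intro has_field_derivative_at_within[OF alpha_has_real_derivative]) simp_all
    moreover have "(gamma P0 T has_real_derivative - ((Pt P0 t)^2 * alpha P0 T t)) (at t within {0..T})"
      using pos by (intro has_field_derivative_at_within[OF gamma_has_real_derivative])
    ultimately have "entropy_hjb_at
        (\<lambda>s x m. exp (alpha P0 T s * m^2 + gamma P0 T s) * (x - w)^2 + eta P0 T tau s * m^2
                   + zeta P0 T tau sig s) {0..T} (Pt P0 t) tau sig t x m"
      using assms(3,4) by (intro exp_quadratic_ansatz_solves_entropy_hjb
            eta_has_real_derivative[OF \<open>0 \<le> P0\<close> t] zeta_has_real_derivative[OF \<open>0 \<le> P0\<close> t])
         simp_all
    then show ?thesis
      unfolding V_def Vfun_def[abs_def] .
  qed
  moreover have "V T x m = (x - w)^2" for x m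
    unfolding V_def using assms(1,2) by (intro Vfun_terminal) (simp add: add_pos_pos)
  ultimately show ?thesis
    unfolding entropy_hjb_at_def by blast
qed

end
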